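(* Let $(M,J)$ be a closed almost complex manifold. If $J$ is $C^{\infty}$ full then both $\iota^{1,1}$ and $\iota^{(2,0),(0,2)}$ are surjective. Consequently, if $J$ is $C^{\infty}$ pure and full, then both $\iota^{1,1}$ and $\iota^{(2,0),(0,2)}$ are isomorphisms.
   Context: Real 2-forms split as $J$-invariant ($\alpha(Jv,Jw)=\alpha(v,w)$, the space $\Omega^{1,1}$) plus $J$-anti-invariant ($\alpha(Jv,Jw)=-\alpha(v,w)$, the space $\Omega^{(2,0),(0,2)}$), with projections $\pi^{1,1},\pi^{(2,0),(0,2)}$. $\mathbf Z,\mathbf B$ are the closed and exact real 2-forms; for $S=(1,1)$ or $(2,0),(0,2)$, $\mathbf Z^S=\mathbf Z\cap\Omega^S$, $\mathbf B^S=\mathbf B\cap\Omega^S$, and $\iota^{S}:\mathbf Z^S/\mathbf B^S\to\pi^S\mathbf Z/\pi^S\mathbf B$ is induced by inclusion. $H_J^{S}(M)_{\mathbb R}=\mathbf Z^S/\mathbf B^S$, viewed as a subspace of $H^2(M;\mathbb R)$. $J$ is $C^\infty$ pure if $H_J^{1,1}(M)_{\mathbb R}\cap H_J^{(2,0),(0,2)}(M)_{\mathbb R}=0$, and $C^\infty$ full if $H_J^{1,1}(M)_{\mathbb R}+H_J^{(2,0),(0,2)}(M)_{\mathbb R}=H^2(M;\mathbb R)$. *)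

theory Defs
  imports Main "HOL.Real_Vector_Spaces"
begin

text \<open>Abstract model: 'b = real 2-forms, 'a = real 1-forms, 'c = real 3-forms on M.
  d1 : 1-forms \<rightarrow> 2-forms and d2 : 2-forms \<rightarrow> 3-forms are the exterior derivatives,
  sig is the action of J on 2-forms, sig alpha (v,w) = alpha (Jv, Jw).\<close>

definition Omega11 :: "('b::real_vector \<Rightarrow> 'b) \<Rightarrow> 'b set" where
  "Omega11 sig = {\<alpha>. sig \<alpha> = \<alpha>}"

definition Omega2002 :: "('b::real_vector \<Rightarrow> 'b) \<Rightarrow> 'b set" where
  "Omega2002 sig = {\<alpha>. sig \<alpha> = - \<alpha>}"

definition pi11 :: "('b::real_vector \<Rightarrow> 'b) \<Rightarrow> 'b \<Rightarrow> 'b" where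
  "pi11 sig \<alpha> = scaleR (1/2) (\<alpha> + sig \<alpha>)"

definition pi2002 :: "('b::real_vector \<Rightarrow> 'b) \<Rightarrow> 'b \<Rightarrow> 'b" where
  "pi2002 sig \<alpha> = scaleR (1/2) (\<alpha> - sig \<alpha>)"

definition closedZ :: "('b::real_vector \<Rightarrow> 'c::real_vector) \<Rightarrow> 'b set" where
  "closedZ d2 = {\<alpha>. d2 \<alpha> = 0}"

definition exactB :: "('a::real_vector \<Rightarrow> 'b::real_vector) \<Rightarrow> 'b set" where
  "exactB d1 = range d1"

text \<open>iota^S : Z^S/B^S \<rightarrow> pi^S Z / pi^S B, [w] \<mapsto> [w]; surjectivity and injectivity.\<close>
definition iota_surj :: "('b::real_vector \<Rightarrow> 'b) \<Rightarrow> 'b set \<Rightarrow> 'b set \<Rightarrow> 'b set \<Rightarrow> bool" where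
  "iota_surj p OS Z B \<longleftrightarrow> (\<forall>y\<in>p ` Z. \<exists>w\<in>Z \<inter> OS. y - w \<in> p ` B)"

definition iota_inj :: "('b::real_vector \<Rightarrow> 'b) \<Rightarrow> 'b set \<Rightarrow> 'b set \<Rightarrow> 'b set \<Rightarrow> bool" where
  "iota_inj p OS Z B \<longleftrightarrow> (\<forall>w\<in>Z \<inter> OS. w \<in> p ` B \<longrightarrow> w \<in> B \<inter> OS)"

definition iota_iso :: "('b::real_vector \<Rightarrow> 'b) \<Rightarrow> 'b set \<Rightarrow> 'b set \<Rightarrow> 'b set \<Rightarrow> bool" where
  "iota_iso p OS Z B \<longleftrightarrow> iota_surj p OS Z B \<and> iota_inj p OS Z B"

text \<open>C^\<infinity> pure: H^{1,1} \<inter> H^{(2,0),(0,2)} = 0 inside H^2 = Z/B.\<close>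
definition Cinf_pure :: "('b::real_vector \<Rightarrow> 'b) \<Rightarrow> 'b set \<Rightarrow> 'b set \<Rightarrow> bool" where
  "Cinf_pure sig Z B \<longleftrightarrow>
     (\<forall>a\<in>Z \<inter> Omega11 sig. \<forall>b\<in>Z \<inter> Omega2002 sig. a - b \<in> B \<longrightarrow> a \<in> B)"

text \<open>C^\<infinity> full: H^{1,1} + H^{(2,0),(0,2)} = H^2.\<close>
definition Cinf_full :: "('b::real_vector \<Rightarrow> 'b) \<Rightarrow> 'b set \<Rightarrow> 'b set \<Rightarrow> bool" where
  "Cinf_full sig Z B \<longleftrightarrow>
     (\<forall>z\<in>Z. \<exists>a\<in>Z \<inter> Omega11 sig. \<exists>b\<in>Z \<inter> Omega2002 sig. z - a - b \<in> B)"

end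

theory Submission
  imports Defs
begin

text \<open>Surjectivity: by fullness a closed \<open>z\<close> differs from \<open>a + b\<close>, with \<open>a\<close>, \<open>b\<close> closed of
  pure type, by an exact form \<open>\<epsilon>\<close>, so \<open>pi11 z = a + pi11 \<epsilon>\<close>.
  Injectivity: if a closed (1,1)-form \<open>w\<close> equals \<open>pi11 \<beta>\<close> with \<open>\<beta>\<close> exact, the other component
  \<open>u = \<beta> - w\<close> is closed of type (2,0),(0,2) and \<open>w - (-u) = \<beta>\<close> is exact, so purity makes \<open>w\<close>
  exact. Replacing the action \<open>\<sigma>\<close> of \<open>J\<close> by \<open>-\<sigma>\<close> swaps the two types and preserves fullness and
  purity, so the claims about type (2,0),(0,2) follow from those about type (1,1).\<close>

lemma pi11_plus_pi2002: "pi11 sig \<alpha> + pi2002 sig \<alpha> = \<alpha>"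
proof -
  have "pi11 sig \<alpha> + pi2002 sig \<alpha> = (1/2) *\<^sub>R (\<alpha> + \<alpha>)"
    unfolding pi11_def pi2002_def by (simp add: algebra_simps)
  then show ?thesis by (simp flip: scaleR_2)
qed

lemma linear_pi11: "linear sig \<Longrightarrow> linear (pi11 sig)"
  unfolding pi11_def by (rule linearI) (simp_all add: linear_add linear_scale algebra_simps)

lemma pi11_Omega11: "\<alpha> \<in> Omega11 sig \<Longrightarrow> pi11 sig \<alpha> = \<alpha>"
  unfolding pi11_def Omega11_def by (simp flip: scaleR_add_right)

lemma pi11_Omega2002: "\<alpha> \<in> Omega2002 sig \<Longrightarrow> pi11 sig \<alpha> = 0"
  unfolding pi11_def Omega2002_def by simp

lemma pi2002_in_Omega2002:
  assumes "linear sig" and "\<And>\<alpha>. sig (sig \<alpha>) = \<alpha>"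
  shows "pi2002 sig \<alpha> \<in> Omega2002 sig"
  unfolding pi2002_def Omega2002_def
  using assms by (simp add: linear_scale linear_diff algebra_simps)

lemma pi11_uminus: "pi11 (\<lambda>\<alpha>. - sig \<alpha>) = pi2002 sig"
  unfolding pi11_def pi2002_def by auto

lemma Omega11_uminus: "Omega11 (\<lambda>\<alpha>. - sig \<alpha>) = Omega2002 sig"
  unfolding Omega11_def Omega2002_def by (auto simp: minus_equation_iff)

lemma Omega2002_uminus: "Omega2002 (\<lambda>\<alpha>. - sig \<alpha>) = Omega11 sig"
  unfolding Omega11_def Omega2002_def by auto

lemma Cinf_full_uminus: "Cinf_full (\<lambda>\<alpha>. - sig \<alpha>) Z B = Cinf_full sig Z B"
  unfolding Cinf_full_def Omega11_uminus Omega2002_uminus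
  by (metis (no_types, lifting) diff_right_commute)

lemma Cinf_pure_uminus:
  assumes "subspace B" and "Cinf_pure sig Z B"
  shows "Cinf_pure (\<lambda>\<alpha>. - sig \<alpha>) Z B"
  unfolding Cinf_pure_def Omega11_uminus Omega2002_uminus
proof (intro ballI impI)
  fix a b assume a: "a \<in> Z \<inter> Omega2002 sig" and b: "b \<in> Z \<inter> Omega11 sig" and ab: "a - b \<in> B"
  have "b - a \<in> B" using subspace_neg[OF assms(1) ab] by simp
  then have "b \<in> B" using assms(2) a b unfolding Cinf_pure_def by blast
  then show "a \<in> B" using subspace_add[OF assms(1) ab, of b] by simp
qed

lemma iota_surj_pi11:
  assumes "linear sig" and "Cinf_full sig Z B"
  shows "iota_surj (pi11 sig) (Omega11 sig) Z B"
  unfolding iota_surj_def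
proof
  fix y assume "y \<in> pi11 sig ` Z"
  then obtain z where z: "z \<in> Z" "y = pi11 sig z" by blast
  with assms(2) obtain a b where a: "a \<in> Z \<inter> Omega11 sig" and b: "b \<in> Z \<inter> Omega2002 sig"
    and e: "z - a - b \<in> B" unfolding Cinf_full_def by blast
  have "pi11 sig (z - a - b) = y - a"
    using z a b by (simp add: linear_diff[OF linear_pi11[OF assms(1)]] pi11_Omega11 pi11_Omega2002)
  then show "\<exists>w\<in>Z \<inter> Omega11 sig. y - w \<in> pi11 sig ` B"
    using a e by (metis image_eqI)
qed

lemma iota_inj_pi11:
  assumes "linear sig" and "\<And>\<alpha>. sig (sig \<alpha>) = \<alpha>"
    and "subspace Z" and "B \<subseteq> Z" and "Cinf_pure sig Z B"
  shows "iota_inj (pi11 sig) (Omega11 sig) Z B"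
  unfolding iota_inj_def
proof (intro ballI impI)
  fix w assume w: "w \<in> Z \<inter> Omega11 sig" and "w \<in> pi11 sig ` B"
  then obtain \<beta> where \<beta>: "\<beta> \<in> B" and w_eq: "w = pi11 sig \<beta>" by blast
  define u where "u = pi2002 sig \<beta>"
  have \<beta>_eq: "\<beta> = w + u"
    unfolding w_eq u_def by (simp add: pi11_plus_pi2002)
  have "- u \<in> Z"
    using \<beta>_eq subspace_diff[OF assms(3), of w \<beta>] w \<beta> assms(4) by auto
  moreover have "- u \<in> Omega2002 sig"
    using pi2002_in_Omega2002[OF assms(1,2)] assms(1)
    by (simp add: u_def Omega2002_def linear_neg)
  ultimately have "w \<in> B"
    using assms(5) w \<beta> \<beta>_eq unfolding Cinf_pure_def by (metis IntI diff_minus_eq_add)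
  with w show "w \<in> B \<inter> Omega11 sig" by blast
qed

theorem lemma2p11:
  fixes d1 :: "'a::real_vector \<Rightarrow> 'b::real_vector"
    and d2 :: "'b \<Rightarrow> 'c::real_vector"
    and sig :: "'b \<Rightarrow> 'b"
  assumes "linear d1" and "linear d2" and "linear sig"
    and "\<And>\<alpha>. sig (sig \<alpha>) = \<alpha>"
    and "\<And>\<beta>. d2 (d1 \<beta>) = 0"
  shows "(Cinf_full sig (closedZ d2) (exactB d1) \<longrightarrow>
            iota_surj (pi11 sig) (Omega11 sig) (closedZ d2) (exactB d1) \<and>
            iota_surj (pi2002 sig) (Omega2002 sig) (closedZ d2) (exactB d1))
       \<and> (Cinf_pure sig (closedZ d2) (exactB d1) \<and> Cinf_full sig (closedZ d2) (exactB d1) \<longrightarrow>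
            iota_iso (pi11 sig) (Omega11 sig) (closedZ d2) (exactB d1) \<and>
            iota_iso (pi2002 sig) (Omega2002 sig) (closedZ d2) (exactB d1))"
proof -
  let ?Z = "closedZ d2" and ?B = "exactB d1" and ?sig' = "\<lambda>\<alpha>. - sig \<alpha>"
  have Z: "subspace ?Z"
    unfolding closedZ_def using assms(2) by (rule linear_subspace_kernel)
  have B: "subspace ?B"
    unfolding exactB_def using assms(1) subspace_UNIV by (rule linear_subspace_image)
  have BZ: "?B \<subseteq> ?Z"
    using assms(5) by (auto simp: exactB_def closedZ_def)
  have sig': "linear ?sig'" "\<And>\<alpha>. ?sig' (?sig' \<alpha>) = \<alpha>"
    using assms(3,4) by (simp_all add: linear_compose_neg linear_neg)
  have "Cinf_full sig ?Z ?B \<Longrightarrow> iota_surj (pi11 sig) (Omega11 sig) ?Z ?B"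
    using iota_surj_pi11[OF assms(3)] .
  moreover have "Cinf_full sig ?Z ?B \<Longrightarrow> iota_surj (pi2002 sig) (Omega2002 sig) ?Z ?B"
    using iota_surj_pi11[OF sig'(1), of ?Z ?B]
    by (simp add: pi11_uminus Omega11_uminus Cinf_full_uminus)
  moreover have "Cinf_pure sig ?Z ?B \<Longrightarrow> iota_inj (pi11 sig) (Omega11 sig) ?Z ?B"
    using iota_inj_pi11[OF assms(3,4) Z BZ] .
  moreover have "Cinf_pure sig ?Z ?B \<Longrightarrow> iota_inj (pi2002 sig) (Omega2002 sig) ?Z ?B"
    using iota_inj_pi11[OF sig' Z BZ Cinf_pure_uminus[OF B]]
    by (simp add: pi11_uminus Omega11_uminus)
  ultimately show ?thesis
    unfolding iota_iso_def by blast
qed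

end
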